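(* For every even $n\ge 6$, the honeycomb toroidal graph $\mathrm{HTG}(1,n,3)$ is even pancyclic, i.e. it contains a cycle of length $L$ for every even $L$ with $4\le L\le n$.
   Context: For $m=1$, even $n\ge 6$ and odd $\ell$ with $\ell\not\equiv\pm1\pmod n$, the honeycomb toroidal graph $\mathrm{HTG}(1,n,\ell)$ has vertex set $\{u_j: j\in\mathbb{Z}_n\}$ and edges $u_ju_{j+1}$ for all $j$ (vertical edges) and $u_ju_{j+\ell}$ for all odd $j$ (jump edges), subscripts modulo $n$. *)

theory Defs
  imports Main
begin

text \<open>Honeycomb toroidal graph HTG(1,n,l): vertices u_0,...,u_(n-1), represented by
  the naturals 0..n-1 (indices taken mod n).\<close>

definition htg1_adj :: "nat \<Rightarrow> nat \<Rightarrow> nat \<Rightarrow> nat \<Rightarrow> bool" where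
  "htg1_adj n l i j \<longleftrightarrow> i < n \<and> j < n \<and>
     (j = (i + 1) mod n \<or> i = (j + 1) mod n \<or>
      (odd i \<and> j = (i + l) mod n) \<or> (odd j \<and> i = (j + l) mod n))"

definition htg1_has_cycle :: "nat \<Rightarrow> nat \<Rightarrow> nat \<Rightarrow> bool" where
  "htg1_has_cycle n l L \<longleftrightarrow> 3 \<le> L \<and>
     (\<exists>vs. length vs = L \<and> distinct vs \<and> set vs \<subseteq> {0..<n} \<and>
        (\<forall>k<L. htg1_adj n l (vs ! k) (vs ! ((k + 1) mod L))))"

definition htg1_even_pancyclic :: "nat \<Rightarrow> nat \<Rightarrow> bool" where
  "htg1_even_pancyclic n l \<longleftrightarrow>
     (\<forall>L. even L \<and> 4 \<le> L \<and> L \<le> n \<longrightarrow> htg1_has_cycle n l L)"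

end

theory Submission
  imports Defs
begin

text \<open>
  For \<open>L = 2m \<le> n\<close>, the vertices \<open>1, \<dots>, 2m\<close> carry a cycle of length \<open>2m\<close>: the vertices
  \<open>\<equiv> 2, 3 (mod 4)\<close> form the path \<open>2, 3, 6, 7, 10, \<dots>\<close> (vertical edges alternating with jump
  edges \<open>4q+3 \<rightarrow> 4q+6\<close>), the vertices \<open>\<equiv> 0, 1 (mod 4)\<close> form the parallel path
  \<open>1, 4, 5, 8, 9, \<dots>\<close>, and the two paths close up into the boundary of a ladder through
  the rungs \<open>1 - 2\<close> at the bottom and \<open>(2m-1) - 2m\<close> at the top.
  All these edges lie in the honeycomb strip on the naturals, where no index wraps around;
  reducing modulo \<open>n\<close> maps the strip edges between vertices \<open>\<le> n\<close> to edges of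
  \<open>HTG(1,n,3)\<close> and is injective on \<open>{1..n}\<close>, so the cycle survives even when \<open>2m = n\<close>.
\<close>

definition strip_adj :: "nat \<Rightarrow> nat \<Rightarrow> bool" where
  "strip_adj i j \<longleftrightarrow> j = i + 1 \<or> i = j + 1 \<or> (odd i \<and> j = i + 3) \<or> (odd j \<and> i = j + 3)"

lemma strip_adj_sym: "strip_adj i j \<longleftrightarrow> strip_adj j i"
  unfolding strip_adj_def by auto

text \<open>Evenness of \<open>n\<close> guarantees that an odd vertex \<open>\<le> n\<close> is \<open>< n\<close>, so its parity survives
  the reduction.\<close>

lemma htg1_adj_mod_if_strip_adj:
  assumes "even n" "0 < n" "i \<le> n" "j \<le> n" "strip_adj i j"
  shows "htg1_adj n 3 (i mod n) (j mod n)"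
  using assms unfolding strip_adj_def htg1_adj_def by (auto simp: mod_Suc le_less)

lemma successively_nth_mod:
  assumes "successively P xs" "P (last xs) (hd xs)" "k < length xs"
  shows "P (xs ! k) (xs ! (Suc k mod length xs))"
proof (cases "Suc k < length xs")
  case True
  then show ?thesis using assms(1) by (simp add: successively_nth)
next
  case False
  then have "k = length xs - 1" "xs \<noteq> []" using assms(3) by auto
  then show ?thesis using assms(2) by (simp add: hd_conv_nth last_conv_nth)
qed

lemma successively_upt: "(\<And>i. P i (Suc i)) \<Longrightarrow> successively P [a..<b]"
  by (simp add: successively_conv_nth)

lemma htg1_has_cycle_if_strip_cycle:
  assumes "even n" "3 \<le> length vs" "distinct vs" "set vs \<subseteq> {1..n}"
    and "successively strip_adj vs" "strip_adj (last vs) (hd vs)"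
  shows "htg1_has_cycle n 3 (length vs)"
proof -
  define ws where "ws = map (\<lambda>v. v mod n) vs"
  have "0 < n" using assms(2,4) by (cases vs) auto
  have "inj_on (\<lambda>v. v mod n) {1..n}"
    by (rule inj_onI) (auto simp: le_less)
  then have "distinct ws"
    using assms(3,4) by (simp add: ws_def distinct_map inj_on_subset)
  moreover have "set ws \<subseteq> {0..<n}"
    using \<open>0 < n\<close> by (auto simp: ws_def)
  moreover have "htg1_adj n 3 (ws ! k) (ws ! (Suc k mod length vs))"
    if "k < length vs" for k
  proof -
    have "Suc k mod length vs < length vs" using that by (intro mod_less_divisor) auto
    then have "vs ! k \<le> n" "vs ! (Suc k mod length vs) \<le> n"
        and "ws ! k = vs ! k mod n" "ws ! (Suc k mod length vs) = vs ! (Suc k mod length vs) mod n"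
      using assms(4) that nth_mem by (fastforce simp: ws_def)+
    then show ?thesis
      using htg1_adj_mod_if_strip_adj[OF assms(1) \<open>0 < n\<close>] successively_nth_mod[OF assms(5,6) that]
      by simp
  qed
  ultimately show ?thesis
    unfolding htg1_has_cycle_def using assms(2) by (intro conjI exI[of _ ws]) (auto simp: ws_def)
qed

definition zigzag :: "nat \<Rightarrow> nat" where
  "zigzag a = 4 * (a div 2) + a mod 2"

lemma zigzag_Suc: "zigzag (Suc a) = (if even a then zigzag a + 1 else zigzag a + 3)"
  unfolding zigzag_def by (cases "even a") (auto simp: mod_Suc div_Suc elim: oddE)

lemma even_zigzag_iff: "even (zigzag a) \<longleftrightarrow> even a"
  unfolding zigzag_def by simp

lemma zigzag_mod_4: "zigzag a mod 4 = a mod 2"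
  unfolding zigzag_def by simp

lemma zigzag_shift_mod_4: "(zigzag a + 2) mod 4 = a mod 2 + 2"
  using zigzag_mod_4[of a] by presburger

lemma zigzag_div_4: "zigzag a div 4 = a div 2"
  unfolding zigzag_def by simp

lemma inj_zigzag: "inj zigzag"
  by (rule injI) (metis zigzag_mod_4 zigzag_div_4 div_mult_mod_eq)

lemma zigzag_eq_0_iff: "zigzag a = 0 \<longleftrightarrow> a = 0"
  unfolding zigzag_def by presburger

lemma zigzag_le: "zigzag a \<le> 2 * a"
  using div_mult_mod_eq[of a 2] unfolding zigzag_def by linarith

lemma strip_adj_zigzag: "strip_adj (zigzag a) (zigzag (Suc a))"
  by (simp add: strip_adj_def zigzag_Suc even_zigzag_iff)

lemma strip_adj_zigzag_shift: "strip_adj (zigzag a + 2) (zigzag (Suc a) + 2)"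
  by (simp add: strip_adj_def zigzag_Suc even_zigzag_iff)

lemma strip_adj_zigzag_rung: "strip_adj (zigzag a + 2) (zigzag (Suc a))"
  by (simp add: strip_adj_def zigzag_Suc even_zigzag_iff)

definition ladder_cycle :: "nat \<Rightarrow> nat list" where
  "ladder_cycle m = map (\<lambda>a. zigzag a + 2) [0..<m] @ rev (map zigzag [1..<Suc m])"

lemma length_ladder_cycle: "length (ladder_cycle m) = 2 * m"
  by (simp add: ladder_cycle_def)

lemma distinct_ladder_cycle: "distinct (ladder_cycle m)"
proof -
  have "inj (\<lambda>a. zigzag a + 2)"
    using inj_zigzag by (simp add: inj_def)
  moreover have "zigzag a + 2 \<noteq> zigzag b" for a b
  proof
    assume "zigzag a + 2 = zigzag b"
    then have "a mod 2 + 2 = b mod 2"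
      using zigzag_shift_mod_4[of a] zigzag_mod_4[of b] by simp
    then show False by simp
  qed
  ultimately show ?thesis
    using inj_zigzag by (auto simp: ladder_cycle_def distinct_map inj_on_subset)
qed

lemma set_ladder_cycle: "set (ladder_cycle m) \<subseteq> {1..2 * m}"
proof -
  have "zigzag a + 2 \<le> 2 * m" if "a < m" for a
    using zigzag_le[of a] that by linarith
  moreover have "zigzag a \<le> 2 * m" "1 \<le> zigzag a" if "1 \<le> a" "a \<le> m" for a
    using zigzag_le[of a] zigzag_eq_0_iff[of a] that by linarith+
  ultimately show ?thesis
    by (auto simp: ladder_cycle_def)
qed

lemma ladder_cycle_is_strip_cycle:
  assumes "0 < m"
  shows "successively strip_adj (ladder_cycle m)"
    and "strip_adj (last (ladder_cycle m)) (hd (ladder_cycle m))"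
proof -
  define up where "up = map (\<lambda>a. zigzag a + 2) [0..<m]"
  define down where "down = rev (map zigzag [1..<Suc m])"
  have "successively strip_adj up"
    unfolding up_def successively_map by (rule successively_upt) (rule strip_adj_zigzag_shift)
  moreover have "successively strip_adj down"
    unfolding down_def successively_rev successively_map
    by (rule successively_upt) (simp add: strip_adj_sym strip_adj_zigzag)
  moreover have "last up = zigzag (m - 1) + 2" "hd down = zigzag m"
    using assms by (simp_all add: up_def down_def last_map hd_rev)
  moreover have "last down = zigzag 1" "hd up = zigzag 0 + 2"
    using assms by (simp_all add: up_def down_def last_rev hd_map del: upt_Suc)
  moreover have "up \<noteq> []" "down \<noteq> []"
    using assms by (simp_all add: up_def down_def)
  moreover have "ladder_cycle m = up @ down"
    by (simp add: ladder_cycle_def up_def down_def)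
  ultimately show "successively strip_adj (ladder_cycle m)"
    and "strip_adj (last (ladder_cycle m)) (hd (ladder_cycle m))"
    using assms strip_adj_zigzag_rung[of "m - 1"] strip_adj_zigzag_rung[of 0]
    by (simp_all add: successively_append_iff strip_adj_sym del: upt_Suc)
qed

theorem mainTheorem10:
  fixes n :: nat
  assumes "even n" and "6 \<le> n"
  shows "htg1_even_pancyclic n 3"
  unfolding htg1_even_pancyclic_def
proof (intro allI impI)
  fix L assume L: "even L \<and> 4 \<le> L \<and> L \<le> n"
  then obtain m where m: "L = 2 * m" by blast
  then have "0 < m" "set (ladder_cycle m) \<subseteq> {1..n}"
    using L set_ladder_cycle[of m] by auto
  then have "htg1_has_cycle n 3 (length (ladder_cycle m))"
    using L m assms(1) ladder_cycle_is_strip_cycle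
    by (intro htg1_has_cycle_if_strip_cycle) (simp_all add: length_ladder_cycle distinct_ladder_cycle)
  then show "htg1_has_cycle n 3 L"
    using m by (simp add: length_ladder_cycle)
qed

end
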